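(* Let $b>0$. The total rates of the $\mathrm{Beta}(1,b)$-coalescent satisfy, for $n\in\mathbb{N}$, $$\lambda_n=b\sum_{k=1}^{n-1}\frac{k}{b+k-1}=b(n-1)-b(b-1)\big(\Psi(n+b-1)-\Psi(b)\big).$$ Moreover, as $n\to\infty$, $$\lambda_n=bn-b(b-1)\log n-b+b(b-1)\Psi(b)+O(n^{-1})$$ and $$\frac{1}{\lambda_n}=\frac{1}{bn}\Big(1+(b-1)\frac{\log n}{n}+\frac{1-(b-1)\Psi(b)}{n}+O\Big(\frac{\log^2 n}{n^2}\Big)\Big).$$
   Context: The $\mathrm{Beta}(1,b)$-coalescent has $\Lambda(dx)=b(1-x)^{b-1}dx$ on $[0,1]$; its total rate from state $n$ is $\lambda_n=\int_0^1\big(1-nx(1-x)^{n-1}-(1-x)^n\big)x^{-2}\Lambda(dx)$ (equal to $\sum_{k=2}^n\binom nk\int_0^1x^{k-2}(1-x)^{n-k}\Lambda(dx)$ for $n\ge2$, and $0$ for $n=1$). $\Psi$ is the digamma function. *)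

theory Defs
  imports "HOL-Analysis.Analysis" "HOL-Library.Landau_Symbols"
begin

text \<open>Beta(1,b) measure density: Lambda(dx) = b (1-x)^(b-1) dx on [0,1].
  Total rate from state n:
  lambda_n = integral over (0,1) of (1 - n x (1-x)^(n-1) - (1-x)^n) x^(-2) Lambda(dx).\<close>
definition beta_rate :: "real \<Rightarrow> nat \<Rightarrow> real" where
  "beta_rate b n = (LINT x:{0<..<1}|lborel.
      (1 - real n * x * (1 - x) ^ (n - 1) - (1 - x) ^ n) / x\<^sup>2 * (b * (1 - x) powr (b - 1)))"

end

theory Submission
  imports Defs "HOL-Real_Asymp.Real_Asymp"
begin

text \<open>Divided by \<open>x\<^sup>2\<close>, the integrand is the polynomial \<open>\<Sum>k=1..n-1. k (1-x)^(k-1)\<close> times the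
  density, so the rate is a finite sum of Beta integrals \<open>b \<integral>\<^sub>0\<^sup>1 (1-x)^(k+b-2) dx = b/(k+b-1)\<close>.
  Writing \<open>k/(b+k-1) = 1 - (b-1)/(b+k-1)\<close> and telescoping \<open>\<Psi>(z+1) = \<Psi>(z) + 1/z\<close> gives
  the closed form. For the expansion, \<open>-1/(x-1) \<le> \<Psi>(x) - ln x \<le> 0\<close>: the sequences
  \<open>\<Psi>(x+N) - ln (x+N)\<close> and \<open>\<Psi>(x+N) - ln (x+N) + 1/(x+N-1)\<close> are increasing resp. decreasing
  and both tend to \<open>0\<close>. The reciprocal is expanded with \<open>1/(1+v) = 1 - v + v\<^sup>2/(1+v)\<close>, where
  \<open>v = \<lambda>\<^sub>n/(bn) - 1 = O(log n / n)\<close>.\<close>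

lemma one_minus_powr_set_integral:
  fixes e :: real
  assumes "e > -1"
  shows "set_integrable lborel {0<..<1} (\<lambda>x. (1 - x) powr e)"
    and "(LINT x:{0<..<1}|lborel. (1 - x) powr e) = 1 / (e + 1)"
proof -
  have pos: "e + 1 > 0" using assms by simp
  have Beta_integrand: "x powr (1 - 1) * (1 - x) powr ((e + 1) - 1) = (1 - x) powr e"
    if "x \<in> {0<..<1}" for x :: real
    using that by simp
  have "set_integrable lborel {0<..<1} (\<lambda>x. x powr (1 - 1) * (1 - x) powr ((e + 1) - 1))"
    by (rule set_integrable_subset[OF integrable_Beta]) (use pos in auto)
  then show integrable: "set_integrable lborel {0<..<1} (\<lambda>x. (1 - x) powr e)"
    by (rule set_integrable_cong[THEN iffD1, rotated 3, OF _ refl refl Beta_integrand])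
  have "Beta 1 (e + 1) = 1 / (e + 1)"
  proof -
    have "Gamma (e + 1 + 1) = (e + 1) * Gamma (e + 1)"
      by (rule Gamma_plus1) (use pos in \<open>auto elim!: nonpos_Ints_cases\<close>)
    moreover have "Gamma (e + 1) > 0" using pos by (rule Gamma_real_pos)
    ultimately show ?thesis unfolding Beta_def by (simp add: add.commute)
  qed
  moreover have "((\<lambda>x. (1 - x) powr e) has_integral Beta 1 (e + 1)) {0<..<1}"
    using has_integral_Beta_real[OF zero_less_one pos, unfolded has_integral_Icc_iff_Ioo]
    by (rule has_integral_eq[OF Beta_integrand, rotated])
  ultimately have "((\<lambda>x. (1 - x) powr e) has_integral 1 / (e + 1)) {0<..<1}"
    by simp
  then show "(LINT x:{0<..<1}|lborel. (1 - x) powr e) = 1 / (e + 1)"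
    using set_borel_integral_eq_integral(2)[OF integrable] by (simp add: integral_unique)
qed

lemma one_minus_power_expansion:
  fixes y :: "'a :: comm_ring_1"
  shows "1 - of_nat (Suc m) * (1 - y) * y ^ m - y ^ Suc m
           = (1 - y)\<^sup>2 * (\<Sum>k=1..m. of_nat k * y ^ (k - 1))"
proof (induction m)
  case (Suc m)
  then show ?case by (simp add: algebra_simps power2_eq_square)
qed simp

lemma beta_rate_integrand_eq_sum:
  fixes b x :: real
  assumes "n \<ge> 1" "0 < x" "x < 1"
  shows "(1 - real n * x * (1 - x) ^ (n - 1) - (1 - x) ^ n) / x\<^sup>2 * (b * (1 - x) powr (b - 1))
       = (\<Sum>k=1..n-1. b * real k * (1 - x) powr (real k + b - 2))"
proof -
  obtain m where n: "n = Suc m" using assms(1) by (cases n) auto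
  have "(1 - real n * x * (1 - x) ^ (n - 1) - (1 - x) ^ n) / x\<^sup>2 * (b * (1 - x) powr (b - 1))
          = (\<Sum>k=1..m. real k * (1 - x) ^ (k - 1)) * (b * (1 - x) powr (b - 1))"
    using one_minus_power_expansion[of m "1 - x"] assms by (simp add: n mult.assoc)
  also have "\<dots> = (\<Sum>k=1..m. b * real k * ((1 - x) ^ (k - 1) * (1 - x) powr (b - 1)))"
    by (simp add: sum_distrib_left sum_distrib_right mult_ac)
  also have "\<dots> = (\<Sum>k=1..m. b * real k * (1 - x) powr (real k + b - 2))"
    by (rule sum.cong) (use assms in \<open>auto simp: powr_realpow[symmetric] powr_add[symmetric] of_nat_diff\<close>)
  finally show ?thesis by (simp add: n)
qed

lemma beta_rate_eq_sum:
  fixes b :: real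
  assumes b: "b > 0" and n: "n \<ge> 1"
  shows "beta_rate b n = b * (\<Sum>k=1..n-1. real k / (b + real k - 1))"
proof -
  have integrable: "set_integrable lborel {0<..<1} (\<lambda>x. b * real k * (1 - x) powr (real k + b - 2))"
    and integral: "(LINT x:{0<..<1}|lborel. b * real k * (1 - x) powr (real k + b - 2))
                     = b * (real k / (b + real k - 1))"
    if "k \<in> {1..n-1}" for k
  proof -
    have "real k + b - 2 > -1" using that b by auto
    from one_minus_powr_set_integral[OF this]
    show "set_integrable lborel {0<..<1} (\<lambda>x. b * real k * (1 - x) powr (real k + b - 2))"
      and "(LINT x:{0<..<1}|lborel. b * real k * (1 - x) powr (real k + b - 2))
             = b * (real k / (b + real k - 1))"
      by (auto simp: algebra_simps)
  qed
  have "beta_rate b n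
      = (LINT x:{0<..<1}|lborel. (\<Sum>k=1..n-1. b * real k * (1 - x) powr (real k + b - 2)))"
    unfolding beta_rate_def
    by (rule set_lebesgue_integral_cong) (use n beta_rate_integrand_eq_sum in auto)
  also have "\<dots> = (\<Sum>k=1..n-1. (LINT x:{0<..<1}|lborel. b * real k * (1 - x) powr (real k + b - 2)))"
    unfolding set_lebesgue_integral_def scaleR_sum_right
    by (rule Bochner_Integration.integral_sum) (use integrable in \<open>auto simp: set_integrable_def\<close>)
  also have "\<dots> = (\<Sum>k=1..n-1. b * (real k / (b + real k - 1)))"
    by (rule sum.cong) (use integral in auto)
  finally show ?thesis by (simp add: sum_distrib_left)
qed

lemma Digamma_plus_of_nat:
  fixes z :: real
  assumes "z > 0"
  shows "Digamma (z + real N) = Digamma z + (\<Sum>k<N. 1 / (z + real k))"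
proof (induction N)
  case (Suc N)
  have "Digamma (z + real (Suc N)) = Digamma (z + real N) + 1 / (z + real N)"
    using Digamma_plus1[of "z + real N"] assms by (simp add: ac_simps)
  then show ?case using Suc by simp
qed simp

lemma sum_frac_eq_Digamma:
  fixes b :: real
  assumes b: "b > 0"
  shows "(\<Sum>k=1..m. real k / (b + real k - 1)) = real m - (b - 1) * (Digamma (b + real m) - Digamma b)"
proof (induction m)
  case (Suc m)
  have "real (Suc m) / (b + real m) = 1 - (b - 1) * (1 / (b + real m))"
    using b by (simp add: field_simps)
  then show ?case
    using Suc Digamma_plus_of_nat[OF b, of m] Digamma_plus_of_nat[OF b, of "Suc m"]
    by (simp add: algebra_simps)
qed simp

lemma Digamma_minus_ln_shift_tendsto:
  fixes z :: real
  assumes z: "z > 0"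
  shows "(\<lambda>N. Digamma (z + real N) - ln (z + real N)) \<longlonglongrightarrow> 0"
proof -
  have "(\<lambda>m. ln (real m) - (Digamma (z + real m) - Digamma z)) \<longlonglongrightarrow> Digamma z"
    using Digamma_LIMSEQ[of z] z by (simp add: Digamma_plus_of_nat divide_inverse)
  then have "(\<lambda>m. Digamma (z + real m) - ln (real m)) \<longlonglongrightarrow> 0"
    by (auto dest: tendsto_diff[OF tendsto_const[of "Digamma z"]])
  moreover have "(\<lambda>m. ln (z + real m) - ln (real m)) \<longlonglongrightarrow> (0::real)"
    by real_asymp
  ultimately show ?thesis by (auto dest: tendsto_diff)
qed

lemma ln_plus1_minus_ln_le:
  fixes x :: real
  assumes "x > 0"
  shows "ln (x + 1) - ln x \<le> 1 / x"
  using ln_le_minus_one[of "(x + 1) / x"] assms by (simp add: ln_div field_simps)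

lemma ln_plus1_minus_ln_ge:
  fixes x :: real
  assumes "x > 0"
  shows "1 / (x + 1) \<le> ln (x + 1) - ln x"
  using ln_le_minus_one[of "x / (x + 1)"] assms by (simp add: ln_div field_simps)

lemma Digamma_le_ln:
  fixes x :: real
  assumes x: "x > 0"
  shows "Digamma x \<le> ln x"
proof -
  define a where "a = (\<lambda>N. Digamma (x + real N) - ln (x + real N))"
  have "incseq a"
  proof (rule incseq_SucI)
    fix N
    have "a (Suc N) = a N + 1 / (x + real N) - (ln (x + real N + 1) - ln (x + real N))"
      using Digamma_plus_of_nat[OF x, of N] Digamma_plus_of_nat[OF x, of "Suc N"]
      unfolding a_def by (simp add: algebra_simps)
    then show "a N \<le> a (Suc N)"
      using ln_plus1_minus_ln_le[of "x + real N"] x by simp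
  qed
  moreover have "a \<longlonglongrightarrow> 0"
    unfolding a_def by (rule Digamma_minus_ln_shift_tendsto[OF x])
  ultimately show ?thesis
    using incseq_le[of a 0 0] by (simp add: a_def)
qed

lemma ln_minus_Digamma_le:
  fixes x :: real
  assumes x: "x > 1"
  shows "ln x - Digamma x \<le> 1 / (x - 1)"
proof -
  have z: "x - 1 > 0" using x by simp
  define e where "e = (\<lambda>N. Digamma (x + real N) - ln (x + real N) + 1 / (x - 1 + real N))"
  have "(\<lambda>N. Digamma (x - 1 + real (Suc N)) - ln (x - 1 + real (Suc N))) \<longlonglongrightarrow> 0"
    using LIMSEQ_Suc[OF Digamma_minus_ln_shift_tendsto[OF z]] .
  moreover have "(\<lambda>N. 1 / (x - 1 + real N)) \<longlonglongrightarrow> 0"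
    by real_asymp
  ultimately have "e \<longlonglongrightarrow> 0 + 0"
    unfolding e_def by (intro tendsto_add) (simp_all add: algebra_simps)
  moreover have "decseq e"
  proof (rule decseq_SucI)
    fix N
    define y where "y = x + real N"
    have y: "y > 1" using x by (simp add: y_def)
    have "Digamma (x + real (Suc N)) = Digamma (x + real N) + 1 / y"
      using Digamma_plus_of_nat[of x N] Digamma_plus_of_nat[of x "Suc N"] x
      by (simp add: y_def)
    then have "e (Suc N) - e N = 2 / y - (ln (y + 1) - ln y) - 1 / (y - 1)"
      unfolding e_def y_def by (simp add: algebra_simps)
    also have "\<dots> \<le> 2 / y - 1 / (y + 1) - 1 / (y - 1)"
      using ln_plus1_minus_ln_ge[of y] y by simp
    also have "\<dots> \<le> 0"
      using y by (simp add: divide_simps) (simp add: algebra_simps)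
    finally show "e (Suc N) \<le> e N" by simp
  qed
  ultimately show ?thesis
    using decseq_ge[of e 0 0] by (simp add: e_def)
qed

lemma Digamma_shift_minus_ln_bigo:
  fixes c :: real
  shows "(\<lambda>n. Digamma (real n + c) - ln (real n)) \<in> O(\<lambda>n. 1 / real n)"
proof -
  have "(\<lambda>n. Digamma (real n + c) - ln (real n + c)) \<in> O(\<lambda>n. 1 / (real n + c - 1))"
  proof (rule bigoI[where c = 1])
    have "\<forall>\<^sub>F n in sequentially. real n + c > 1"
      by real_asymp
    then show "\<forall>\<^sub>F n in sequentially.
        norm (Digamma (real n + c) - ln (real n + c)) \<le> 1 * norm (1 / (real n + c - 1))"
    proof eventually_elim
      case (elim n)
      then show ?case
        using Digamma_le_ln[of "real n + c"] ln_minus_Digamma_le[of "real n + c"] by simp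
    qed
  qed
  also have "(\<lambda>n. 1 / (real n + c - 1)) \<in> O(\<lambda>n. 1 / real n)"
    by real_asymp
  finally have "(\<lambda>n. (Digamma (real n + c) - ln (real n + c)) + (ln (real n + c) - ln (real n)))
                  \<in> O(\<lambda>n. 1 / real n)"
    by (rule sum_in_bigo) real_asymp
  then show ?thesis by simp
qed

lemma relative_error_bigo:
  fixes f :: "nat \<Rightarrow> real" and a c d :: real
  assumes c: "c > 0"
    and f: "(\<lambda>n. f n - (c * real n + a * ln (real n) + d)) \<in> O(\<lambda>n. 1 / real n)"
  shows "(\<lambda>n. f n / (c * real n) - 1) \<in> O(\<lambda>n. ln (real n) / real n)"
proof -
  define L :: "nat \<Rightarrow> real" where "L = (\<lambda>n. ln (real n) / real n)"
  have "(\<lambda>n. a / c * L n) \<in> O(L)"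
    using landau_o.big.mult[OF bigo_const[of "a / c"] landau_o.big_refl[of L]] by simp
  moreover have "(\<lambda>n. d / c * (1 / real n)) \<in> O(L)"
  proof -
    have "(\<lambda>n. 1 / real n) \<in> O(L)"
      unfolding L_def by real_asymp
    from landau_o.big.mult[OF bigo_const[of "d / c"] this] show ?thesis
      by simp
  qed
  moreover have "(\<lambda>n. (f n - (c * real n + a * ln (real n) + d)) / c * (1 / real n)) \<in> O(L)"
  proof -
    have "(\<lambda>n. (f n - (c * real n + a * ln (real n) + d)) / c * (1 / real n))
            \<in> O(\<lambda>n. 1 / real n * (1 / real n))"
      using f c by (intro landau_o.big.mult_right) simp
    also have "(\<lambda>n. 1 / real n * (1 / real n)) \<in> O(L)"
      unfolding L_def by real_asymp
    finally show ?thesis .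
  qed
  ultimately have "(\<lambda>n. a / c * L n + d / c * (1 / real n)
                     + (f n - (c * real n + a * ln (real n) + d)) / c * (1 / real n)) \<in> O(L)"
    by (intro sum_in_bigo)
  moreover have "\<forall>\<^sub>F n in sequentially. a / c * L n + d / c * (1 / real n)
                   + (f n - (c * real n + a * ln (real n) + d)) / c * (1 / real n)
                   = f n / (c * real n) - 1"
    using eventually_gt_at_top[of 0]
    by eventually_elim (use c in \<open>simp add: L_def field_simps\<close>)
  ultimately show ?thesis
    unfolding L_def by (simp only: landau_o.big.in_cong)
qed

lemma reciprocal_second_order_identity:
  fixes F m v a d :: real
  assumes "m \<noteq> 0" "1 + v \<noteq> 0" "F = m * (1 + v)"
  shows "1 / F - 1 / m * (1 - a / m - d / m)
           = 1 / m * (v * v * (1 / (1 + v)) - (F - (m + a + d)) / m)"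
  using assms(1,2) unfolding assms(3) by (simp add: divide_simps) (simp add: algebra_simps)

lemma inverse_one_plus_bigo:
  fixes v :: "'a \<Rightarrow> real"
  assumes "(v \<longlongrightarrow> 0) F"
  shows "(\<lambda>x. 1 / (1 + v x)) \<in> O[F](\<lambda>_. 1)"
proof (rule bigoI_tendsto[where c = 1])
  have "((\<lambda>x. 1 + v x) \<longlongrightarrow> 1) F"
    using tendsto_add[OF tendsto_const assms, of 1] by simp
  from tendsto_divide[OF tendsto_const this, of 1] show "((\<lambda>x. 1 / (1 + v x) / 1) \<longlongrightarrow> 1) F"
    by simp
qed simp

lemma reciprocal_bigo_expansion:
  fixes f :: "nat \<Rightarrow> real" and a c d :: real
  assumes c: "c > 0"
    and f: "(\<lambda>n. f n - (c * real n + a * ln (real n) + d)) \<in> O(\<lambda>n. 1 / real n)"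
  shows "(\<lambda>n. 1 / f n - 1 / (c * real n) * (1 - a * ln (real n) / (c * real n) - d / (c * real n)))
           \<in> O(\<lambda>n. 1 / (c * real n) * (ln (real n))\<^sup>2 / (real n)\<^sup>2)"
proof -
  define v where "v = (\<lambda>n. f n / (c * real n) - 1)"
  define L :: "nat \<Rightarrow> real" where "L = (\<lambda>n. ln (real n) / real n)"
  have v: "v \<in> O(L)"
    unfolding v_def L_def by (rule relative_error_bigo[OF c f])
  have L_small: "L \<in> o(\<lambda>_. 1)"
    unfolding L_def by real_asymp
  have v_tendsto: "v \<longlonglongrightarrow> 0"
    using smalloD_tendsto[OF landau_o.big_small_trans[OF v L_small]] by simp
  have "(\<lambda>n. v n * v n * (1 / (1 + v n))) \<in> O(\<lambda>n. L n * L n)"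
    by (intro landau_o.big_1_mult landau_o.big.mult v inverse_one_plus_bigo v_tendsto)
  moreover have "(\<lambda>n. (f n - (c * real n + a * ln (real n) + d)) / (c * real n)) \<in> O(\<lambda>n. L n * L n)"
  proof -
    have "(\<lambda>n. (f n - (c * real n + a * ln (real n) + d)) / c * (1 / real n))
            \<in> O(\<lambda>n. 1 / real n * (1 / real n))"
      using f c by (intro landau_o.big.mult_right) simp
    also have "(\<lambda>n. 1 / real n * (1 / real n)) \<in> O(\<lambda>n. L n * L n)"
      unfolding L_def by real_asymp
    finally show ?thesis by simp
  qed
  ultimately have "(\<lambda>n. 1 / (c * real n) * (v n * v n * (1 / (1 + v n))
                     - (f n - (c * real n + a * ln (real n) + d)) / (c * real n)))
                     \<in> O(\<lambda>n. 1 / (c * real n) * (L n * L n))"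
    by (rule landau_o.big.mult_left[OF sum_in_bigo(2)])
  moreover have "\<forall>\<^sub>F n in sequentially.
      1 / (c * real n) * (v n * v n * (1 / (1 + v n))
        - (f n - (c * real n + a * ln (real n) + d)) / (c * real n))
      = 1 / f n - 1 / (c * real n) * (1 - a * ln (real n) / (c * real n) - d / (c * real n))"
    using eventually_gt_at_top[of 0] order_tendstoD(1)[OF v_tendsto, of "-1", simplified]
  proof eventually_elim
    case (elim n)
    have "f n = c * real n * (1 + v n)"
      using c elim by (simp add: v_def field_simps)
    with elim c show ?case
      by (intro reciprocal_second_order_identity[symmetric]) simp_all
  qed
  moreover have "(\<lambda>n. 1 / (c * real n) * (L n * L n))
                   = (\<lambda>n. 1 / (c * real n) * (ln (real n))\<^sup>2 / (real n)\<^sup>2)"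
    by (simp add: L_def power2_eq_square)
  ultimately show ?thesis
    by (simp only: landau_o.big.in_cong)
qed

lemma beta_rate_sum_eq_Digamma:
  fixes b :: real
  assumes b: "b > 0" and n: "n \<ge> 1"
  shows "b * (\<Sum>k=1..n-1. real k / (b + real k - 1))
           = b * (real n - 1) - b * (b - 1) * (Digamma (real n + b - 1) - Digamma b)"
proof -
  obtain m where m: "n = Suc m" using n by (cases n) auto
  have sum: "(\<Sum>k=1..n-1. real k / (b + real k - 1))
               = real m - (b - 1) * (Digamma (b + real m) - Digamma b)"
    using sum_frac_eq_Digamma[OF b, of m] by (simp add: m)
  have arg: "real n + b - 1 = b + real m" by (simp add: m)
  show ?thesis
    unfolding sum arg by (simp add: m algebra_simps)
qed

lemma beta_rate_expansion:
  fixes b :: real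
  assumes b: "b > 0"
  shows "(\<lambda>n. beta_rate b n - (b * real n - b * (b - 1) * ln (real n) - b + b * (b - 1) * Digamma b))
           \<in> O(\<lambda>n. 1 / real n)"
proof -
  have rate: "beta_rate b n = b * (real n - 1) - b * (b - 1) * (Digamma (real n + b - 1) - Digamma b)"
    if "n \<ge> 1" for n
    using beta_rate_eq_sum[OF b that] beta_rate_sum_eq_Digamma[OF b that] by simp
  have "(\<lambda>n. - (b * (b - 1)) * (Digamma (real n + (b - 1)) - ln (real n))) \<in> O(\<lambda>n. 1 / real n)"
    using Digamma_shift_minus_ln_bigo[of "b - 1"] by simp
  moreover have "\<forall>\<^sub>F n in sequentially. - (b * (b - 1)) * (Digamma (real n + (b - 1)) - ln (real n))
      = beta_rate b n - (b * real n - b * (b - 1) * ln (real n) - b + b * (b - 1) * Digamma b)"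
    using eventually_ge_at_top[of 1]
    by eventually_elim (simp add: rate algebra_simps)
  ultimately show ?thesis
    by (simp only: landau_o.big.in_cong)
qed

theorem lemma6p4:
  fixes b :: real
  assumes "b > 0"
  shows "(\<forall>n::nat. n \<ge> 1 \<longrightarrow>
            beta_rate b n = b * (\<Sum>k=1..n-1. real k / (b + real k - 1)) \<and>
            b * (\<Sum>k=1..n-1. real k / (b + real k - 1))
              = b * (real n - 1) - b * (b - 1) * (Digamma (real n + b - 1) - Digamma b))
       \<and> (\<lambda>n. beta_rate b n - (b * real n - b * (b - 1) * ln (real n) - b + b * (b - 1) * Digamma b))
            \<in> O(\<lambda>n. 1 / real n)
       \<and> (\<lambda>n. 1 / beta_rate b n - 1 / (b * real n) * (1 + (b - 1) * ln (real n) / real n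
                 + (1 - (b - 1) * Digamma b) / real n))
            \<in> O(\<lambda>n. 1 / (b * real n) * (ln (real n))\<^sup>2 / (real n)\<^sup>2)"
proof -
  have "(\<lambda>n. beta_rate b n - (b * real n + (- (b * (b - 1))) * ln (real n) + (b * (b - 1) * Digamma b - b)))
          \<in> O(\<lambda>n. 1 / real n)"
    using beta_rate_expansion[OF assms] by (simp add: algebra_simps)
  note reciprocal = reciprocal_bigo_expansion[OF assms this]
  have coefficients:
    "1 / (b * x) * (1 - (- (b * (b - 1))) * ln x / (b * x) - (b * (b - 1) * Digamma b - b) / (b * x))
       = 1 / (b * x) * (1 + (b - 1) * ln x / x + (1 - (b - 1) * Digamma b) / x)" for x :: real
    using assms by (cases "x = 0") (simp_all add: field_simps)
  show ?thesis
    using beta_rate_eq_sum[OF assms] beta_rate_sum_eq_Digamma[OF assms]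
      beta_rate_expansion[OF assms] reciprocal[unfolded coefficients]
    by blast
qed

end
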